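(* Suppose $C\subseteq\mathbb{R}^n$ is smoothly approximately convex at $\bar x\in C$, and let $H:U\to\mathbb{R}^m$, where $U$ is an open neighborhood of $\bar x$ in $\mathbb{R}^n$, be a $\mathcal{C}^{(1)}$-smooth embedding. Then $H(C\cap U)$ is smoothly approximately convex at $H(\bar x)$.
   Context: A $\mathcal{C}^{(1)}$-smooth embedding is a $\mathcal{C}^{(1)}$ map $H$ with $\nabla H(w)$ injective for all $w$ that is a homeomorphism onto its image. A set $S\subseteq\mathbb{R}^N$ is smoothly approximately convex at $\bar z\in S$ if for every $\epsilon>0$ there is a neighborhood $W$ of $\bar z$ such that for all $z,z'\in S\cap W$ there is a map $\gamma:[0,1]\to S$, extending to a $\mathcal{C}^{(1)}$ map on an open neighborhood of $[0,1]$, with $\gamma(0)=z,\gamma(1)=z'$ and $\|\gamma'(t)-(z'-z)\|\le\epsilon\|z'-z\|$ for all $t\in[0,1]$. *)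

theory Defs
  imports "HOL-Analysis.Analysis"
begin

definition smooth_embedding :: "'a::euclidean_space set \<Rightarrow> ('a \<Rightarrow> 'b::euclidean_space) \<Rightarrow> bool" where
  "smooth_embedding U H \<longleftrightarrow>
     (\<exists>H'. (\<forall>w\<in>U. (H has_derivative blinfun_apply (H' w)) (at w))
          \<and> continuous_on U H'
          \<and> (\<forall>w\<in>U. inj (blinfun_apply (H' w))))
     \<and> (\<exists>G. homeomorphism U (H ` U) H G)"

text \<open>The curve gamma is required
  to be C1 on an open set V containing [0,1] (this is the extension), to map
  [0,1] into S, and its derivative gamma' satisfies the estimate on [0,1].\<close>
definition smoothly_approx_convex :: "'a::euclidean_space set \<Rightarrow> 'a \<Rightarrow> bool" where
  "smoothly_approx_convex S zbar \<longleftrightarrow>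
     (\<forall>\<epsilon>>0. \<exists>W. open W \<and> zbar \<in> W \<and>
        (\<forall>z\<in>S \<inter> W. \<forall>z'\<in>S \<inter> W.
           \<exists>\<gamma> \<gamma>' V. open V \<and> {0..1::real} \<subseteq> V
             \<and> (\<forall>t\<in>V. (\<gamma> has_vector_derivative \<gamma>' t) (at t))
             \<and> continuous_on V \<gamma>'
             \<and> \<gamma> ` {0..1} \<subseteq> S \<and> \<gamma> 0 = z \<and> \<gamma> 1 = z'
             \<and> (\<forall>t\<in>{0..1}. norm (\<gamma>' t - (z' - z)) \<le> \<epsilon> * norm (z' - z))))"

end

theory Submission
  imports Defs
begin

text \<open>Near \<open>xbar\<close> the derivative of \<open>H\<close> stays within \<open>\<kappa>\<close> of the injective map
  \<open>A = H' xbar\<close>, which satisfies \<open>m \<bar>v\<bar> \<le> \<bar>A v\<bar>\<close>. By the mean value inequality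
  \<open>H z' - H z\<close> is then within \<open>\<kappa> \<bar>z' - z\<bar>\<close> of \<open>A (z' - z)\<close>, so in particular
  \<open>\<bar>H z' - H z\<bar> \<ge> (m - \<kappa>) \<bar>z' - z\<bar>\<close>. If \<open>\<sigma>\<close> is a curve in \<open>C\<close> from \<open>z\<close> to \<open>z'\<close> whose
  velocity is \<open>\<eta>\<close>-close to \<open>z' - z\<close>, then the velocity \<open>H' (\<sigma> t) (\<sigma>' t)\<close> of \<open>H \<circ> \<sigma>\<close>
  differs from \<open>H z' - H z\<close> by \<open>O(\<kappa> + \<eta>) \<bar>z' - z\<bar>\<close>, hence by \<open>O(\<kappa> + \<eta>) / m\<close> times
  \<open>\<bar>H z' - H z\<bar>\<close>. Since \<open>H\<close> is a homeomorphism onto its image, points of \<open>H (C \<inter> U)\<close>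
  close to \<open>H xbar\<close> come from points of \<open>C\<close> close to \<open>xbar\<close>.\<close>

definition approx_segment ::
    "real set \<Rightarrow> real \<Rightarrow> (real \<Rightarrow> 'a::real_normed_vector) \<Rightarrow> (real \<Rightarrow> 'a) \<Rightarrow> bool" where
  "approx_segment V \<epsilon> \<gamma> \<gamma>' \<longleftrightarrow>
     open V \<and> {0..1} \<subseteq> V
     \<and> (\<forall>t\<in>V. (\<gamma> has_vector_derivative \<gamma>' t) (at t))
     \<and> continuous_on V \<gamma>'
     \<and> (\<forall>t\<in>{0..1}. norm (\<gamma>' t - (\<gamma> 1 - \<gamma> 0)) \<le> \<epsilon> * norm (\<gamma> 1 - \<gamma> 0))"

lemma smoothly_approx_convex_iff_approx_segment:
  "smoothly_approx_convex S zbar \<longleftrightarrow>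
     (\<forall>\<epsilon>>0. \<exists>W. open W \<and> zbar \<in> W \<and>
        (\<forall>z\<in>S \<inter> W. \<forall>z'\<in>S \<inter> W. \<exists>\<gamma> \<gamma>' V.
           approx_segment V \<epsilon> \<gamma> \<gamma>' \<and> \<gamma> ` {0..1} \<subseteq> S \<and> \<gamma> 0 = z \<and> \<gamma> 1 = z'))"
proof -
  have segment_iff: "(\<exists>\<gamma> \<gamma>' V. open V \<and> {0..1::real} \<subseteq> V
             \<and> (\<forall>t\<in>V. (\<gamma> has_vector_derivative \<gamma>' t) (at t))
             \<and> continuous_on V \<gamma>'
             \<and> \<gamma> ` {0..1} \<subseteq> S \<and> \<gamma> 0 = z \<and> \<gamma> 1 = z'
             \<and> (\<forall>t\<in>{0..1}. norm (\<gamma>' t - (z' - z)) \<le> \<epsilon> * norm (z' - z)))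
    \<longleftrightarrow> (\<exists>\<gamma> \<gamma>' V. approx_segment V \<epsilon> \<gamma> \<gamma>' \<and> \<gamma> ` {0..1} \<subseteq> S \<and> \<gamma> 0 = z \<and> \<gamma> 1 = z')"
    for \<epsilon> z z'
    unfolding approx_segment_def by (intro ex_cong1 iffI) auto
  show ?thesis
    by (simp only: smoothly_approx_convex_def segment_iff)
qed

lemma approx_segment_subset_cball:
  assumes "approx_segment V \<eta> \<gamma> \<gamma>'"
  shows "\<gamma> ` {0..1} \<subseteq> cball (\<gamma> 0) ((1 + \<eta>) * norm (\<gamma> 1 - \<gamma> 0))"
proof clarify
  fix t :: real assume t: "t \<in> {0..1}"
  define d where "d = \<gamma> 1 - \<gamma> 0"
  have deriv: "\<And>s. s \<in> {0..1} \<Longrightarrow> (\<gamma> has_vector_derivative \<gamma>' s) (at s)"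
    and close: "\<And>s. s \<in> {0..1} \<Longrightarrow> norm (\<gamma>' s - d) \<le> \<eta> * norm d"
    using assms unfolding approx_segment_def d_def by auto
  have speed: "norm (\<gamma>' s) \<le> (1 + \<eta>) * norm d" if "s \<in> {0..1}" for s
    using close[OF that] norm_triangle_ineq2[of "\<gamma>' s" d] by (simp add: algebra_simps)
  have "norm (\<gamma> t - \<gamma> 0) \<le> (1 + \<eta>) * norm d * norm (t - 0)"
  proof (rule differentiable_bound[where S = "{0..1}" and f' = "\<lambda>s h. h *\<^sub>R \<gamma>' s"])
    fix s :: real assume "s \<in> {0..1}"
    then show "(\<gamma> has_derivative (\<lambda>h. h *\<^sub>R \<gamma>' s)) (at s within {0..1})"
      using deriv has_derivative_at_withinI unfolding has_vector_derivative_def by blast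
    show "onorm (\<lambda>h. h *\<^sub>R \<gamma>' s) \<le> (1 + \<eta>) * norm d"
      using speed[OF \<open>s \<in> {0..1}\<close>] by (simp add: onorm_scaleR_left[OF bounded_linear_ident] onorm_id)
  qed (use t in auto)
  also have "\<dots> \<le> (1 + \<eta>) * norm d"
  proof (rule mult_left_le)
    show "0 \<le> (1 + \<eta>) * norm d"
      using order_trans[OF norm_ge_zero speed[of 0]] by simp
  qed (use t in auto)
  finally show "\<gamma> t \<in> cball (\<gamma> 0) ((1 + \<eta>) * norm (\<gamma> 1 - \<gamma> 0))"
    by (simp add: d_def dist_norm norm_minus_commute)
qed

lemma approx_segment_subset_ball:
  assumes seg: "approx_segment V \<eta> \<sigma> \<sigma>'" and "\<eta> \<le> 1"
    and ends: "\<sigma> 0 \<in> ball x (r/5)" "\<sigma> 1 \<in> ball x (r/5)"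
  shows "\<sigma> ` {0..1} \<subseteq> ball x r"
proof clarify
  fix t :: real assume "t \<in> {0..1}"
  then have "dist (\<sigma> 0) (\<sigma> t) \<le> (1 + \<eta>) * norm (\<sigma> 1 - \<sigma> 0)"
    using approx_segment_subset_cball[OF seg] unfolding image_subset_iff mem_cball by blast
  also have "\<dots> \<le> 2 * norm (\<sigma> 1 - \<sigma> 0)"
    using \<open>\<eta> \<le> 1\<close> by (intro mult_right_mono) auto
  also have "\<dots> \<le> 2 * (dist x (\<sigma> 1) + dist x (\<sigma> 0))"
    using dist_triangle3[of "\<sigma> 1" "\<sigma> 0" x] by (simp add: dist_norm)
  finally have "dist (\<sigma> 0) (\<sigma> t) \<le> 2 * (dist x (\<sigma> 1) + dist x (\<sigma> 0))" .
  then have "dist x (\<sigma> t) < r"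
    using ends[unfolded mem_ball] dist_triangle[of x "\<sigma> t" "\<sigma> 0"] by argo
  then show "\<sigma> t \<in> ball x r"
    by simp
qed

lemma C1_path_compose:
  fixes H :: "'a::real_normed_vector \<Rightarrow> 'b::real_normed_vector"
    and H' :: "'a \<Rightarrow> 'a \<Rightarrow>\<^sub>L 'b"
  assumes "open V" "{0..1} \<subseteq> V"
    and \<gamma>: "\<forall>t\<in>V. (\<gamma> has_vector_derivative \<gamma>' t) (at t)" and \<gamma>': "continuous_on V \<gamma>'"
    and "open U" "\<gamma> ` {0..1} \<subseteq> U"
    and H: "\<forall>w\<in>U. (H has_derivative H' w) (at w)" and H': "continuous_on U H'"
  obtains V' where "open V'" "{0..1} \<subseteq> V'"
    and "\<forall>t\<in>V'. ((H \<circ> \<gamma>) has_vector_derivative H' (\<gamma> t) (\<gamma>' t)) (at t)"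
    and "continuous_on V' (\<lambda>t. H' (\<gamma> t) (\<gamma>' t))"
proof
  define V' where "V' = V \<inter> \<gamma> -` U"
  have "continuous_on V \<gamma>"
    using \<gamma> by (meson continuous_at_imp_continuous_on has_vector_derivative_continuous)
  then show "open V'"
    unfolding V'_def using \<open>open V\<close> \<open>open U\<close> by (rule continuous_open_preimage)
  show "{0..1} \<subseteq> V'"
    using assms(2,6) by (auto simp: V'_def)
  have "V' \<subseteq> V" "\<gamma> ` V' \<subseteq> U"
    by (auto simp: V'_def)
  show "\<forall>t\<in>V'. ((H \<circ> \<gamma>) has_vector_derivative H' (\<gamma> t) (\<gamma>' t)) (at t)"
  proof
    fix t assume "t \<in> V'"
    then have "((H \<circ> \<gamma>) has_derivative (H' (\<gamma> t) \<circ> (\<lambda>h. h *\<^sub>R \<gamma>' t))) (at t)"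
      using \<gamma> H \<open>V' \<subseteq> V\<close> \<open>\<gamma> ` V' \<subseteq> U\<close> unfolding has_vector_derivative_def
      by (blast intro: diff_chain_at)
    then show "((H \<circ> \<gamma>) has_vector_derivative H' (\<gamma> t) (\<gamma>' t)) (at t)"
      by (simp add: has_vector_derivative_def o_def blinfun.scaleR_right)
  qed
  have "continuous_on V' (\<lambda>t. H' (\<gamma> t))"
    using continuous_on_subset[OF \<open>continuous_on V \<gamma>\<close> \<open>V' \<subseteq> V\<close>] \<open>\<gamma> ` V' \<subseteq> U\<close>
    by (rule continuous_on_compose2[OF H'])
  then show "continuous_on V' (\<lambda>t. H' (\<gamma> t) (\<gamma>' t))"
    using continuous_on_subset[OF \<gamma>' \<open>V' \<subseteq> V\<close>] by (intro continuous_intros)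
qed

lemma norm_blinfun_apply_sub_le:
  fixes A B :: "'a::real_normed_vector \<Rightarrow>\<^sub>L 'b::real_normed_vector"
  assumes B: "norm (B - A) \<le> \<kappa>" and s: "norm (s - d) \<le> \<eta> * norm d"
    and e: "norm (e - A d) \<le> \<kappa> * norm d"
  shows "norm (B s - e) \<le> (\<kappa> * (2 + \<eta>) + norm A * \<eta>) * norm d"
proof -
  have "norm s \<le> (1 + \<eta>) * norm d"
    using s norm_triangle_ineq2[of s d] by (simp add: algebra_simps)
  have "norm ((B - A) s) \<le> norm (B - A) * norm s"
    by (rule norm_blinfun)
  also have "\<dots> \<le> \<kappa> * ((1 + \<eta>) * norm d)"
    using B order_trans[OF norm_ge_zero B] \<open>norm s \<le> (1 + \<eta>) * norm d\<close>
    by (intro mult_mono) auto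
  finally have Bs: "norm ((B - A) s) \<le> \<kappa> * ((1 + \<eta>) * norm d)" .
  have "norm (A (s - d)) \<le> norm A * norm (s - d)"
    by (rule norm_blinfun)
  also have "\<dots> \<le> norm A * (\<eta> * norm d)"
    using s by (intro mult_left_mono) auto
  finally have As: "norm (A (s - d)) \<le> norm A * (\<eta> * norm d)" .
  have decomp: "B s - e = (B - A) s + A (s - d) - (e - A d)"
    by (simp add: blinfun.diff_left blinfun.diff_right)
  have "norm (B s - e) \<le> norm ((B - A) s) + norm (A (s - d)) + norm (e - A d)"
    unfolding decomp using norm_triangle_ineq4[of "(B - A) s + A (s - d)" "e - A d"]
      norm_triangle_ineq[of "(B - A) s" "A (s - d)"] by linarith
  with Bs As e show ?thesis
    by (simp add: algebra_simps)
qed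

lemma norm_chord_sub_derivative_le:
  fixes H :: "'a::real_normed_vector \<Rightarrow> 'b::real_normed_vector"
    and H' :: "'a \<Rightarrow> 'a \<Rightarrow>\<^sub>L 'b"
  assumes "convex S" "x \<in> S" "z \<in> S" "z' \<in> S"
    and H: "\<forall>w\<in>S. (H has_derivative H' w) (at w)"
    and near: "\<forall>w\<in>S. norm (H' w - H' x) \<le> \<kappa>"
  shows "norm (H z' - H z - H' x (z' - z)) \<le> \<kappa> * norm (z' - z)"
proof -
  have "norm (H z' - H z - H' x (z' - z)) \<le> norm (z' - z) * \<kappa>"
  proof (rule differentiable_bound_linearization[where S = S])
    fix t :: real assume "t \<in> {0..1}"
    then have "(1 - t) *\<^sub>R z + t *\<^sub>R z' \<in> S"
      using assms by (intro convexD_alt) auto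
    then show "z + t *\<^sub>R (z' - z) \<in> S"
      by (simp add: algebra_simps)
  next
    fix w assume "w \<in> S"
    then show "(H has_derivative H' w) (at w within S)"
      using H by (blast intro: has_derivative_at_withinI)
    show "onorm (blinfun_apply (H' w) - blinfun_apply (H' x)) \<le> \<kappa>"
      using near \<open>w \<in> S\<close> by (simp add: norm_blinfun.rep_eq minus_blinfun.rep_eq fun_diff_def)
  qed fact
  then show ?thesis
    by (simp add: mult.commute)
qed

lemma homeomorphism_pullback_neighbourhood:
  assumes hom: "homeomorphism U T H G" and "open S" "x \<in> S" "x \<in> U"
  obtains W where "open W" "H x \<in> W" "\<And>z. z \<in> U \<Longrightarrow> H z \<in> W \<Longrightarrow> z \<in> S"
proof -
  have "continuous_on T G" and GH: "\<And>z. z \<in> U \<Longrightarrow> G (H z) = z" and HU: "H ` U = T"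
    using hom by (auto simp: homeomorphism_def)
  then obtain W where "open W" and W: "W \<inter> T = G -` S \<inter> T"
    using \<open>open S\<close> unfolding continuous_on_open_invariant by blast
  show thesis
  proof
    show "H x \<in> W"
      using W GH HU \<open>x \<in> S\<close> \<open>x \<in> U\<close> by blast
    show "z \<in> S" if "z \<in> U" "H z \<in> W" for z
      using W GH HU that by (metis IntI image_eqI vimageE Int_iff)
  qed fact
qed

lemma approx_segment_image:
  fixes H :: "'a::real_normed_vector \<Rightarrow> 'b::real_normed_vector"
    and H' :: "'a \<Rightarrow> 'a \<Rightarrow>\<^sub>L 'b"
  assumes H: "\<forall>w\<in>ball x r. (H has_derivative H' w) (at w)" and H': "continuous_on (ball x r) H'"
    and near: "\<forall>w\<in>ball x r. norm (H' w - H' x) \<le> \<kappa>"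
    and below: "\<forall>v. m * norm v \<le> norm (H' x v)"
    and seg: "approx_segment V \<eta> \<sigma> \<sigma>'" and ends: "\<sigma> 0 \<in> ball x (r/5)" "\<sigma> 1 \<in> ball x (r/5)"
    and "\<eta> \<le> 1" "0 \<le> \<epsilon>" and small: "3 * \<kappa> + norm (H' x) * \<eta> \<le> \<epsilon> * (m - \<kappa>)"
  shows "\<exists>V'. approx_segment V' \<epsilon> (H \<circ> \<sigma>) (\<lambda>t. H' (\<sigma> t) (\<sigma>' t))"
proof -
  define d where "d = \<sigma> 1 - \<sigma> 0"
  define e where "e = H (\<sigma> 1) - H (\<sigma> 0)"
  have in_ball: "\<sigma> ` {0..1} \<subseteq> ball x r"
    using approx_segment_subset_ball[OF seg \<open>\<eta> \<le> 1\<close> ends] .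
  then have "\<sigma> 0 \<in> ball x r" "\<sigma> 1 \<in> ball x r"
    unfolding image_subset_iff by simp_all
  moreover from this(1) have "x \<in> ball x r"
    by (meson centre_in_ball mem_ball le_less_trans zero_le_dist)
  ultimately have lin: "norm (e - H' x d) \<le> \<kappa> * norm d"
    using norm_chord_sub_derivative_le[OF convex_ball _ _ _ H near] unfolding d_def e_def by blast
  have "0 \<le> \<kappa>"
    using near[rule_format, OF \<open>x \<in> ball x r\<close>] by simp
  have "(m - \<kappa>) * norm d = m * norm d - \<kappa> * norm d"
    by (simp add: left_diff_distrib)
  then have lower: "(m - \<kappa>) * norm d \<le> norm e"
    using below[rule_format, of d] lin norm_triangle_ineq2[of "H' x d" e]
      norm_minus_commute[of "H' x d" e] by linarith
  have \<sigma>: "open V" "{0..1} \<subseteq> V" "\<forall>t\<in>V. (\<sigma> has_vector_derivative \<sigma>' t) (at t)" "continuous_on V \<sigma>'"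
    and close: "\<forall>t\<in>{0..1}. norm (\<sigma>' t - d) \<le> \<eta> * norm d"
    using seg by (auto simp: approx_segment_def d_def)
  obtain V' where "open V'" "{0..1} \<subseteq> V'"
    and "\<forall>t\<in>V'. ((H \<circ> \<sigma>) has_vector_derivative H' (\<sigma> t) (\<sigma>' t)) (at t)"
    and "continuous_on V' (\<lambda>t. H' (\<sigma> t) (\<sigma>' t))"
    using C1_path_compose[OF \<sigma> open_ball in_ball H H'] by blast
  moreover have "norm (H' (\<sigma> t) (\<sigma>' t) - e) \<le> \<epsilon> * norm e" if "t \<in> {0..1}" for t
  proof -
    have "\<sigma> t \<in> ball x r"
      using in_ball that by blast
    then have "norm (H' (\<sigma> t) (\<sigma>' t) - e) \<le> (\<kappa> * (2 + \<eta>) + norm (H' x) * \<eta>) * norm d"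
      using near close lin that by (intro norm_blinfun_apply_sub_le) auto
    also have "\<dots> \<le> (3 * \<kappa> + norm (H' x) * \<eta>) * norm d"
      using \<open>\<eta> \<le> 1\<close> \<open>0 \<le> \<kappa>\<close> mult_left_mono[of "2 + \<eta>" 3 \<kappa>]
      by (intro mult_right_mono) auto
    also have "\<dots> \<le> \<epsilon> * ((m - \<kappa>) * norm d)"
      using mult_right_mono[OF small norm_ge_zero[of d]] by (simp add: mult.assoc)
    also have "\<dots> \<le> \<epsilon> * norm e"
      using lower \<open>0 \<le> \<epsilon>\<close> by (rule mult_left_mono)
    finally show ?thesis .
  qed
  ultimately show ?thesis
    unfolding approx_segment_def e_def by auto
qed

lemma perturbation_constants_exist:
  fixes a m \<epsilon> :: real
  assumes "0 \<le> a" "0 < m" "0 < \<epsilon>"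
  obtains \<kappa> \<eta> where "0 < \<kappa>" "0 < \<eta>" "\<eta> \<le> 1" "3 * \<kappa> + a * \<eta> \<le> \<epsilon> * (m - \<kappa>)"
proof
  define \<kappa> where "\<kappa> = min (m/2) (\<epsilon> * m / 12)"
  define \<eta> where "\<eta> = min 1 (\<epsilon> * m / (4 * (a + 1)))"
  show "0 < \<kappa>" "0 < \<eta>" "\<eta> \<le> 1"
    using assms by (auto simp: \<kappa>_def \<eta>_def intro!: divide_pos_pos add_nonneg_pos)
  have "\<eta> \<le> \<epsilon> * m / (4 * (a + 1))"
    by (simp add: \<eta>_def)
  then have "\<eta> * (4 * (a + 1)) \<le> \<epsilon> * m"
    using \<open>0 \<le> a\<close> by (simp add: pos_le_divide_eq add_nonneg_pos)
  then have "a * \<eta> \<le> \<epsilon> * m / 4"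
    using \<open>0 < \<eta>\<close> by (simp add: algebra_simps)
  moreover have "\<epsilon> * \<kappa> \<le> \<epsilon> * (m / 2)"
    using \<open>0 < \<epsilon>\<close> by (intro mult_left_mono) (auto simp: \<kappa>_def)
  ultimately show "3 * \<kappa> + a * \<eta> \<le> \<epsilon> * (m - \<kappa>)"
    by (simp add: \<kappa>_def right_diff_distrib)
qed

lemma C1_transfers_approx_segments:
  fixes H :: "'a::real_normed_vector \<Rightarrow> 'b::euclidean_space"
    and H' :: "'a \<Rightarrow> 'a \<Rightarrow>\<^sub>L 'b"
  assumes "open U" "x \<in> U" and H: "\<forall>w\<in>U. (H has_derivative H' w) (at w)"
    and H': "continuous_on U H'" and "inj (H' x)" and "\<epsilon> > 0"
  shows "\<exists>N \<eta>. open N \<and> x \<in> N \<and> \<eta> > 0 \<and>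
           (\<forall>V \<sigma> \<sigma>'. approx_segment V \<eta> \<sigma> \<sigma>' \<and> \<sigma> 0 \<in> N \<and> \<sigma> 1 \<in> N \<longrightarrow>
              \<sigma> ` {0..1} \<subseteq> U \<and> (\<exists>V' \<gamma>'. approx_segment V' \<epsilon> (H \<circ> \<sigma>) \<gamma>'))"
proof -
  obtain m where "m > 0" and below: "\<forall>v. m * norm v \<le> norm (H' x v)"
    using linear_inj_bounded_below_pos[of "blinfun_apply (H' x)"] \<open>inj (H' x)\<close>
    by (metis blinfun.bounded_linear_right bounded_linear.linear)
  obtain \<kappa> \<eta> where "0 < \<kappa>" "0 < \<eta>" "\<eta> \<le> 1" and small: "3 * \<kappa> + norm (H' x) * \<eta> \<le> \<epsilon> * (m - \<kappa>)"
    using perturbation_constants_exist[OF norm_ge_zero \<open>m > 0\<close> \<open>\<epsilon> > 0\<close>] by blast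
  have "open (U \<inter> H' -` ball (H' x) \<kappa>)"
    using continuous_open_preimage[OF H' \<open>open U\<close> open_ball] .
  moreover have "x \<in> U \<inter> H' -` ball (H' x) \<kappa>"
    using \<open>x \<in> U\<close> \<open>0 < \<kappa>\<close> by simp
  ultimately obtain r where "r > 0" and r: "ball x r \<subseteq> U \<inter> H' -` ball (H' x) \<kappa>"
    using open_contains_ball by blast
  then have "ball x r \<subseteq> U" and near: "\<forall>w\<in>ball x r. norm (H' w - H' x) \<le> \<kappa>"
    by (auto simp: dist_norm norm_minus_commute less_imp_le)
  have "\<forall>w\<in>ball x r. (H has_derivative H' w) (at w)" "continuous_on (ball x r) H'"
    using H continuous_on_subset[OF H' \<open>ball x r \<subseteq> U\<close>] \<open>ball x r \<subseteq> U\<close> by auto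
  note transfer = approx_segment_image[OF this near below _ _ _ \<open>\<eta> \<le> 1\<close> _ small]
  have "\<forall>V \<sigma> \<sigma>'. approx_segment V \<eta> \<sigma> \<sigma>' \<and> \<sigma> 0 \<in> ball x (r/5) \<and> \<sigma> 1 \<in> ball x (r/5) \<longrightarrow>
          \<sigma> ` {0..1} \<subseteq> U \<and> (\<exists>V' \<gamma>'. approx_segment V' \<epsilon> (H \<circ> \<sigma>) \<gamma>')"
  proof (intro allI impI, elim conjE)
    fix V \<sigma> \<sigma>' assume seg: "approx_segment V \<eta> \<sigma> \<sigma>'"
      and ends: "\<sigma> 0 \<in> ball x (r/5)" "\<sigma> 1 \<in> ball x (r/5)"
    show "\<sigma> ` {0..1} \<subseteq> U \<and> (\<exists>V' \<gamma>'. approx_segment V' \<epsilon> (H \<circ> \<sigma>) \<gamma>')"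
      using approx_segment_subset_ball[OF seg \<open>\<eta> \<le> 1\<close> ends] \<open>ball x r \<subseteq> U\<close>
        transfer[OF seg ends less_imp_le[OF \<open>\<epsilon> > 0\<close>]] by blast
  qed
  then show ?thesis
    using \<open>r > 0\<close> \<open>0 < \<eta>\<close> by (intro exI[of _ "ball x (r/5)"] exI[of _ \<eta>]) auto
qed

lemma smoothly_approx_convex_homeomorphic_image:
  assumes "smoothly_approx_convex C x" "x \<in> U" and hom: "homeomorphism U (H ` U) H G"
    and transfer: "\<And>\<epsilon>. \<epsilon> > 0 \<Longrightarrow> \<exists>N \<eta>. open N \<and> x \<in> N \<and> \<eta> > 0 \<and>
           (\<forall>V \<sigma> \<sigma>'. approx_segment V \<eta> \<sigma> \<sigma>' \<and> \<sigma> 0 \<in> N \<and> \<sigma> 1 \<in> N \<longrightarrow>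
              \<sigma> ` {0..1} \<subseteq> U \<and> (\<exists>V' \<gamma>'. approx_segment V' \<epsilon> (H \<circ> \<sigma>) \<gamma>'))"
  shows "smoothly_approx_convex (H ` (C \<inter> U)) (H x)"
  unfolding smoothly_approx_convex_iff_approx_segment
proof (intro allI impI)
  fix \<epsilon> :: real assume "\<epsilon> > 0"
  obtain N \<eta> where "open N" "x \<in> N" "\<eta> > 0" and transfer\<epsilon>: "\<forall>V \<sigma> \<sigma>'.
      approx_segment V \<eta> \<sigma> \<sigma>' \<and> \<sigma> 0 \<in> N \<and> \<sigma> 1 \<in> N \<longrightarrow>
      \<sigma> ` {0..1} \<subseteq> U \<and> (\<exists>V' \<gamma>'. approx_segment V' \<epsilon> (H \<circ> \<sigma>) \<gamma>')"
    using transfer[OF \<open>\<epsilon> > 0\<close>] by blast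
  obtain WC where "open WC" "x \<in> WC" and segC: "\<forall>z\<in>C \<inter> WC. \<forall>z'\<in>C \<inter> WC.
      \<exists>\<sigma> \<sigma>' V. approx_segment V \<eta> \<sigma> \<sigma>' \<and> \<sigma> ` {0..1} \<subseteq> C \<and> \<sigma> 0 = z \<and> \<sigma> 1 = z'"
    using assms(1)[unfolded smoothly_approx_convex_iff_approx_segment, rule_format, OF \<open>\<eta> > 0\<close>]
    by blast
  obtain W where "open W" "H x \<in> W" and pull: "\<And>z. z \<in> U \<Longrightarrow> H z \<in> W \<Longrightarrow> z \<in> N \<inter> WC"
    using homeomorphism_pullback_neighbourhood[OF hom, of "N \<inter> WC" x]
      \<open>open N\<close> \<open>open WC\<close> \<open>x \<in> N\<close> \<open>x \<in> WC\<close> \<open>x \<in> U\<close> by auto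
  have "\<forall>y\<in>H ` (C \<inter> U) \<inter> W. \<forall>y'\<in>H ` (C \<inter> U) \<inter> W.
      \<exists>\<gamma> \<gamma>' V. approx_segment V \<epsilon> \<gamma> \<gamma>' \<and> \<gamma> ` {0..1} \<subseteq> H ` (C \<inter> U) \<and> \<gamma> 0 = y \<and> \<gamma> 1 = y'"
  proof (intro ballI)
    fix y y' assume "y \<in> H ` (C \<inter> U) \<inter> W" "y' \<in> H ` (C \<inter> U) \<inter> W"
    then obtain z z' where z: "z \<in> C \<inter> U" "z' \<in> C \<inter> U" "y = H z" "y' = H z'"
      and "H z \<in> W" "H z' \<in> W"
      by blast
    then have "z \<in> C \<inter> WC" "z' \<in> C \<inter> WC" "z \<in> N" "z' \<in> N"
      using pull by auto
    obtain \<sigma> \<sigma>' V where seg: "approx_segment V \<eta> \<sigma> \<sigma>'" and "\<sigma> ` {0..1} \<subseteq> C"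
      and ends: "\<sigma> 0 = z" "\<sigma> 1 = z'"
      using segC[rule_format, OF \<open>z \<in> C \<inter> WC\<close> \<open>z' \<in> C \<inter> WC\<close>] by blast
    have "\<sigma> 0 \<in> N" "\<sigma> 1 \<in> N"
      using ends \<open>z \<in> N\<close> \<open>z' \<in> N\<close> by simp_all
    with seg transfer\<epsilon> \<open>\<sigma> ` {0..1} \<subseteq> C\<close>
    obtain V' \<gamma>' where "\<sigma> ` {0..1} \<subseteq> C \<inter> U" "approx_segment V' \<epsilon> (H \<circ> \<sigma>) \<gamma>'"
      by (meson le_inf_iff)
    moreover from this(1) have "(H \<circ> \<sigma>) ` {0..1} \<subseteq> H ` (C \<inter> U)"
      unfolding image_comp[symmetric] by (rule image_mono)
    moreover have "(H \<circ> \<sigma>) 0 = y" "(H \<circ> \<sigma>) 1 = y'"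
      using ends z by simp_all
    ultimately show "\<exists>\<gamma> \<gamma>' V. approx_segment V \<epsilon> \<gamma> \<gamma>' \<and> \<gamma> ` {0..1} \<subseteq> H ` (C \<inter> U) \<and> \<gamma> 0 = y \<and> \<gamma> 1 = y'"
      by blast
  qed
  with \<open>open W\<close> \<open>H x \<in> W\<close>
  show "\<exists>W. open W \<and> H x \<in> W \<and> (\<forall>y\<in>H ` (C \<inter> U) \<inter> W. \<forall>y'\<in>H ` (C \<inter> U) \<inter> W.
      \<exists>\<gamma> \<gamma>' V. approx_segment V \<epsilon> \<gamma> \<gamma>' \<and> \<gamma> ` {0..1} \<subseteq> H ` (C \<inter> U) \<and> \<gamma> 0 = y \<and> \<gamma> 1 = y')"
    by blast
qed

theorem lemma3p5:
  fixes C :: "'a::euclidean_space set" and H :: "'a \<Rightarrow> 'b::euclidean_space"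
    and U :: "'a set" and xbar :: 'a
  assumes "xbar \<in> C" and "smoothly_approx_convex C xbar"
    and "open U" and "xbar \<in> U"
    and "smooth_embedding U H"
  shows "smoothly_approx_convex (H ` (C \<inter> U)) (H xbar)"
proof -
  obtain H' G where H: "\<forall>w\<in>U. (H has_derivative blinfun_apply (H' w)) (at w)"
    and H': "continuous_on U H'" and inj: "\<forall>w\<in>U. inj (blinfun_apply (H' w))"
    and hom: "homeomorphism U (H ` U) H G"
    using assms(5) unfolding smooth_embedding_def by blast
  show ?thesis
    by (rule smoothly_approx_convex_homeomorphic_image[OF assms(2,4) hom])
      (rule C1_transfers_approx_segments[OF assms(3,4) H H' inj[rule_format, OF assms(4)]])
qed

end
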